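(* Let $Q$ be a finite connected quandle that is isomorphic to a generalized Alexander quandle $\mathrm{GAlex}(G_0,f)$ for some finite group $G_0$ and $f\in\mathrm{Aut}(G_0)$. Let $e\in Q$, $G=\mathrm{Inn}(Q)$, $x=R_e$, $G'$ the derived subgroup of $G$ and $C(x)$ the centralizer of $x$ in $G$. Then the map $\pi_e:C(x)\cap G'\to\mathrm{inn}^{-1}(R_e)$, $\pi_e(g)=eg$, is a bijection. Hence $\pi_e$ induces a $\mathbb{Z}$-module isomorphism $(\pi_e)_*:\mathbb{Z}[C(x)\cap G']\to\mathbb{Z}[\mathrm{inn}^{-1}(R_e)]$, $\sum n_g g\mapsto\sum n_g\pi_e(g)$.
   Context: A quandle is a set with operation $*$ satisfying $a*a=a$; unique right division; $(a*b)*c=(a*c)*(b*c)$. $R_a(y)=y*a$; $\mathrm{Inn}(Q)$ is the permutation group generated by the $R_a$, acting on $Q$ on the right: $ag$ denotes the image of $a$ under $g$; connected means this action is transitive; $\mathrm{inn}(a)=R_a$. For a group $H$ and $f\in\mathrm{Aut}(H)$, $\mathrm{GAlex}(H,f)$ is the quandle on $H$ with $a*b=f(ab^{-1})b$. $\mathbb{Z}[S]$ denotes the free $\mathbb{Z}$-module with basis $S$. *)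

theory Defs
  imports "HOL-Algebra.Algebra"
begin

definition quandle :: "'a set \<Rightarrow> ('a \<Rightarrow> 'a \<Rightarrow> 'a) \<Rightarrow> bool" where
  "quandle Q op \<longleftrightarrow>
     (\<forall>a\<in>Q. \<forall>b\<in>Q. op a b \<in> Q) \<and>
     (\<forall>a\<in>Q. op a a = a) \<and>
     (\<forall>a\<in>Q. \<forall>b\<in>Q. \<exists>!c. c \<in> Q \<and> op c b = a) \<and>
     (\<forall>a\<in>Q. \<forall>b\<in>Q. \<forall>c\<in>Q. op (op a b) c = op (op a c) (op b c))"

definition Rmul :: "'a set \<Rightarrow> ('a \<Rightarrow> 'a \<Rightarrow> 'a) \<Rightarrow> 'a \<Rightarrow> ('a \<Rightarrow> 'a)" where
  "Rmul Q op a = (\<lambda>y\<in>Q. op y a)"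

text \<open>Elements are functions g with the action a g = g a.  (The group law of BijGroup
  is composition; the derived subgroup and centralizers do not depend on whether
  one composes on the left or on the right.)\<close>
definition Inn :: "'a set \<Rightarrow> ('a \<Rightarrow> 'a \<Rightarrow> 'a) \<Rightarrow> ('a \<Rightarrow> 'a) monoid" where
  "Inn Q op = (BijGroup Q)\<lparr>carrier := generate (BijGroup Q) (Rmul Q op ` Q)\<rparr>"

definition connected_quandle :: "'a set \<Rightarrow> ('a \<Rightarrow> 'a \<Rightarrow> 'a) \<Rightarrow> bool" where
  "connected_quandle Q op \<longleftrightarrow> quandle Q op \<and>
     (\<forall>a\<in>Q. \<forall>b\<in>Q. \<exists>g\<in>carrier (Inn Q op). g a = b)"

definition centralizer :: "('g, 'b) monoid_scheme \<Rightarrow> 'g \<Rightarrow> 'g set" where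
  "centralizer G x = {g \<in> carrier G. g \<otimes>\<^bsub>G\<^esub> x = x \<otimes>\<^bsub>G\<^esub> g}"

definition galex_op :: "('g, 'b) monoid_scheme \<Rightarrow> ('g \<Rightarrow> 'g) \<Rightarrow> 'g \<Rightarrow> 'g \<Rightarrow> 'g" where
  "galex_op H f a b = f (a \<otimes>\<^bsub>H\<^esub> inv\<^bsub>H\<^esub> b) \<otimes>\<^bsub>H\<^esub> b"

definition quandle_iso :: "'a set \<Rightarrow> ('a \<Rightarrow> 'a \<Rightarrow> 'a) \<Rightarrow> 'c set \<Rightarrow> ('c \<Rightarrow> 'c \<Rightarrow> 'c) \<Rightarrow> ('a \<Rightarrow> 'c) \<Rightarrow> bool" where
  "quandle_iso Q op P op' \<phi> \<longleftrightarrow> bij_betw \<phi> Q P \<and>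
     (\<forall>a\<in>Q. \<forall>b\<in>Q. \<phi> (op a b) = op' (\<phi> a) (\<phi> b))"

text \<open>The free Z-module Z[S]: finitely supported integer functions supported in S.\<close>
definition freeZ :: "'x set \<Rightarrow> ('x \<Rightarrow> int) set" where
  "freeZ S = {n. (\<forall>x. x \<notin> S \<longrightarrow> n x = 0) \<and> finite {x. n x \<noteq> 0}}"

text \<open>Linear extension of p: sum n_g g \<mapsto> sum n_g p(g).\<close>
definition pushZ :: "('x \<Rightarrow> 'y) \<Rightarrow> ('x \<Rightarrow> int) \<Rightarrow> ('y \<Rightarrow> int)" where
  "pushZ p n = (\<lambda>y. \<Sum>g\<in>{g. n g \<noteq> 0 \<and> p g = y}. n g)"

definition Zmod_iso :: "'x set \<Rightarrow> 'y set \<Rightarrow> (('x \<Rightarrow> int) \<Rightarrow> ('y \<Rightarrow> int)) \<Rightarrow> bool" where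
  "Zmod_iso A B F \<longleftrightarrow> bij_betw F (freeZ A) (freeZ B) \<and>
     (\<forall>m\<in>freeZ A. \<forall>n\<in>freeZ A. F (\<lambda>x. m x + n x) = (\<lambda>y. F m y + F n y)) \<and>
     (\<forall>k::int. \<forall>n\<in>freeZ A. F (\<lambda>x. k * n x) = (\<lambda>y. k * F n y))"

end

theory Submission
  imports Defs
begin

text \<open>
  If \<open>g a = b\<close> for some \<open>g \<in> Inn(Q)\<close>, then \<open>R\<^sub>b = g R\<^sub>a g\<^sup>-\<^sup>1\<close>, so every quotient
  \<open>R\<^sub>b R\<^sub>a\<^sup>-\<^sup>1\<close> lies in the derived subgroup \<open>D\<close>. As \<open>D\<close> is normal, \<open>Inn(Q) = D \<langle>R\<^sub>a\<rangle>\<close>,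
  and \<open>\<langle>R\<^sub>a\<rangle>\<close> fixes \<open>a\<close>; hence \<open>D\<close> acts transitively on a connected quandle. Since
  \<open>g R\<^sub>e g\<^sup>-\<^sup>1 = R\<^bsub>g e\<^esub>\<close>, an element \<open>g\<close> centralizes \<open>R\<^sub>e\<close> iff \<open>R\<^bsub>g e\<^esub> = R\<^sub>e\<close>; so \<open>g \<mapsto> g e\<close>
  maps \<open>C(R\<^sub>e) \<inter> D\<close> onto \<open>inn\<^sup>-\<^sup>1(R\<^sub>e)\<close>, and it is injective as soon as \<open>D\<close> acts freely.

  In \<open>GAlex(H, f)\<close> we have \<open>y * a = f(y) f(a)\<^sup>-\<^sup>1 a\<close>, so every element of \<open>Inn(Q)\<close> acts
  as \<open>y \<mapsto> f\<^sup>n(y) k\<close>. In a commutator the powers of \<open>f\<close> cancel, hence \<open>D\<close> acts by right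
  translations, which act freely.
\<close>

lemma funpow_period_on:
  assumes "finite S" and "bij_betw f S S"
  obtains n where "n > 0" and "\<And>x. x \<in> S \<Longrightarrow> (f ^^ n) x = x"
proof -
  define p where "p x = (if x \<in> S then f x else x)" for x
  have "bij_betw p S S"
    using assms(2) by (rule bij_betw_cong[THEN iffD1, rotated]) (simp add: p_def)
  hence "p permutes S" by (rule bij_imp_permutes) (simp add: p_def)
  hence "permutation p" using assms(1) permutation_permutes by blast
  then obtain n where n: "p ^^ n = id" "n > 0" by (rule permutation_is_nilpotent)
  have "(p ^^ m) x = (f ^^ m) x \<and> (f ^^ m) x \<in> S" if "x \<in> S" for m x
    using that assms(2) by (induction m) (auto simp: p_def bij_betwE)
  with n show thesis using that by (metis id_apply)
qed

lemma funpow_mult_fixed: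
  assumes "\<And>x. x \<in> S \<Longrightarrow> (f ^^ n) x = x" and "x \<in> S"
  shows "(f ^^ (n * k)) x = x"
  by (induction k) (simp_all add: assms funpow_add)

lemma hom_funpow:
  assumes "h \<in> hom G G"
  shows "h ^^ n \<in> hom G G"
proof (induction n)
  case 0
  show ?case by (simp add: hom_def)
next
  case (Suc n)
  thus ?case using assms by (simp add: hom_def Pi_def)
qed

lemma (in group) generate_decomp_normal_cyclic:
  assumes S: "S \<subseteq> carrier G" and r: "r \<in> carrier G" and N: "N \<lhd> G"
    and div: "\<And>s. s \<in> S \<Longrightarrow> s \<otimes> inv r \<in> N"
    and g: "g \<in> generate G S"
  shows "\<exists>n\<in>N. \<exists>p\<in>generate G {r}. g = n \<otimes> p"
  using g
proof (induction rule: generate.induct)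
  case one
  have "\<one> \<in> N" using N normal_imp_subgroup subgroup.one_closed by blast
  thus ?case using generate.one[of G "{r}"] by force
next
  case (incl s)
  have "s = (s \<otimes> inv r) \<otimes> r" using S incl r by (auto simp: m_assoc)
  thus ?case using div[OF incl] generate.incl[of r "{r}"] by blast
next
  case (inv s)
  have s: "s \<in> carrier G" using S inv by auto
  have "inv r \<otimes> inv (s \<otimes> inv r) \<otimes> r \<in> N"
    using normal.inv_op_closed1[OF N r subgroup.m_inv_closed[OF normal_imp_subgroup[OF N] div[OF inv]]] .
  moreover have "inv s = (inv r \<otimes> inv (s \<otimes> inv r) \<otimes> r) \<otimes> inv r"
    using s r by (simp add: inv_mult_group m_assoc inv_solve_left)
  ultimately show ?case using generate.inv[of r "{r}"] by blast
next
  case (eng g h)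
  from eng.IH obtain n1 p1 n2 p2 where n: "n1 \<in> N" "n2 \<in> N"
    and p: "p1 \<in> generate G {r}" "p2 \<in> generate G {r}" and gh: "g = n1 \<otimes> p1" "h = n2 \<otimes> p2"
    by blast
  have NG: "subgroup N G" using N by (rule normal_imp_subgroup)
  have p': "p1 \<in> carrier G" "p2 \<in> carrier G" using p r generate_in_carrier[of "{r}"] by auto
  have n': "n1 \<in> carrier G" "n2 \<in> carrier G" using n subgroup.mem_carrier[OF NG] by auto
  have "g \<otimes> h = (n1 \<otimes> (p1 \<otimes> n2 \<otimes> inv p1)) \<otimes> (p1 \<otimes> p2)"
    using p' n' by (simp add: gh m_assoc inv_solve_left)
  moreover have "n1 \<otimes> (p1 \<otimes> n2 \<otimes> inv p1) \<in> N"
    using subgroup.m_closed[OF NG n(1) normal.inv_op_closed2[OF N p'(1) n(2)]] .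
  moreover have "p1 \<otimes> p2 \<in> generate G {r}" using p by (rule generate.eng)
  ultimately show ?case by blast
qed

section \<open>Free \<open>\<int>\<close>-modules\<close>

lemma freeZ_add: "m \<in> freeZ A \<Longrightarrow> n \<in> freeZ A \<Longrightarrow> (\<lambda>x. m x + n x) \<in> freeZ A"
proof -
  assume "m \<in> freeZ A" "n \<in> freeZ A"
  moreover have "{x. m x + n x \<noteq> 0} \<subseteq> {x. m x \<noteq> 0} \<union> {x. n x \<noteq> 0}" by auto
  ultimately show ?thesis unfolding freeZ_def by (auto intro: finite_subset)
qed

lemma freeZ_scale: "n \<in> freeZ A \<Longrightarrow> (\<lambda>x. k * n x) \<in> freeZ A"
  unfolding freeZ_def by (auto intro: finite_subset[of _ "{x. n x \<noteq> 0}"])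

lemma pushZ_in_freeZ:
  assumes p: "p ` A \<subseteq> B" and n: "n \<in> freeZ A"
  shows "pushZ p n \<in> freeZ B"
proof -
  have supp: "{y. pushZ p n y \<noteq> 0} \<subseteq> p ` {x. n x \<noteq> 0}"
  proof
    fix y assume y: "y \<in> {y. pushZ p n y \<noteq> 0}"
    have "{g. n g \<noteq> 0 \<and> p g = y} \<noteq> {}"
    proof
      assume "{g. n g \<noteq> 0 \<and> p g = y} = {}"
      hence "pushZ p n y = 0" unfolding pushZ_def by (simp only: sum.empty)
      with y show False by simp
    qed
    thus "y \<in> p ` {x. n x \<noteq> 0}" by blast
  qed
  have "{x. n x \<noteq> 0} \<subseteq> A" and "finite {x. n x \<noteq> 0}"
    using n unfolding freeZ_def by auto
  hence "p ` {x. n x \<noteq> 0} \<subseteq> B" and "finite {y. pushZ p n y \<noteq> 0}"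
    using p supp by (auto intro: finite_subset[OF supp])
  thus ?thesis using supp unfolding freeZ_def by blast
qed

lemma pullback_in_freeZ:
  assumes p: "inj_on p A" and m: "m \<in> freeZ B"
  shows "(\<lambda>x. if x \<in> A then m (p x) else 0) \<in> freeZ A"
proof -
  have "{x. (if x \<in> A then m (p x) else 0) \<noteq> 0} \<subseteq> p -` {y. m y \<noteq> 0} \<inter> A" by auto
  moreover have "finite (p -` {y. m y \<noteq> 0} \<inter> A)"
    using m p unfolding freeZ_def by (intro finite_vimage_IntI) auto
  ultimately have "finite {x. (if x \<in> A then m (p x) else 0) \<noteq> 0}" by (rule finite_subset)
  thus ?thesis unfolding freeZ_def by simp
qed

lemma pushZ_bij_betw:
  assumes p: "bij_betw p A B" and n: "n \<in> freeZ A"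
  shows "pushZ p n = (\<lambda>y. if y \<in> B then n (inv_into A p y) else 0)"
proof
  fix y
  have supp: "{g. n g \<noteq> 0 \<and> p g = y} = {x \<in> A. p x = y} \<inter> {x. n x \<noteq> 0}"
    using n unfolding freeZ_def by blast
  have fibre: "{x \<in> A. p x = y} = (if y \<in> B then {inv_into A p y} else {})"
    using p by (auto simp: bij_betw_def inv_into_into inj_on_eq_iff)
  show "pushZ p n y = (if y \<in> B then n (inv_into A p y) else 0)"
    unfolding pushZ_def supp fibre by (cases "n (inv_into A p y) = 0") auto
qed

lemma bij_betw_pushZ:
  assumes p: "bij_betw p A B"
  shows "bij_betw (pushZ p) (freeZ A) (freeZ B)"
proof (rule bij_betw_byWitness[where f' = "\<lambda>m x. if x \<in> A then m (p x) else 0"])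
  show "\<forall>n\<in>freeZ A. (\<lambda>x. if x \<in> A then pushZ p n (p x) else 0) = n"
    using p by (auto simp: pushZ_bij_betw freeZ_def bij_betwE bij_betw_inv_into_left)
  show "\<forall>m\<in>freeZ B. pushZ p (\<lambda>x. if x \<in> A then m (p x) else 0) = m"
  proof
    fix m assume m: "m \<in> freeZ B"
    have right: "inv_into A p y \<in> A" "p (inv_into A p y) = y" if "y \<in> B" for y
      using p that by (simp_all add: bij_betwE[OF bij_betw_inv_into] bij_betw_inv_into_right)
    have pull: "(\<lambda>x. if x \<in> A then m (p x) else 0) \<in> freeZ A"
      using pullback_in_freeZ[OF bij_betw_imp_inj_on[OF p] m] .
    show "pushZ p (\<lambda>x. if x \<in> A then m (p x) else 0) = m"
    proof
      fix y show "pushZ p (\<lambda>x. if x \<in> A then m (p x) else 0) y = m y"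
        using m right[of y] unfolding freeZ_def by (simp add: pushZ_bij_betw[OF p pull])
    qed
  qed
  show "pushZ p ` freeZ A \<subseteq> freeZ B"
    using p pushZ_in_freeZ by (metis bij_betw_imp_surj_on image_subsetI order_refl)
  show "(\<lambda>m x. if x \<in> A then m (p x) else 0) ` freeZ B \<subseteq> freeZ A"
    using pullback_in_freeZ[OF bij_betw_imp_inj_on[OF p]] by blast
qed

lemma Zmod_iso_pushZ:
  assumes p: "bij_betw p A B"
  shows "Zmod_iso A B (pushZ p)"
  unfolding Zmod_iso_def
proof (intro conjI ballI allI)
  show "bij_betw (pushZ p) (freeZ A) (freeZ B)" using p by (rule bij_betw_pushZ)
next
  fix m n assume "m \<in> freeZ A" "n \<in> freeZ A"
  thus "pushZ p (\<lambda>x. m x + n x) = (\<lambda>y. pushZ p m y + pushZ p n y)"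
    by (simp add: pushZ_bij_betw[OF p] freeZ_add fun_eq_iff)
next
  fix k :: int and n assume "n \<in> freeZ A"
  thus "pushZ p (\<lambda>x. k * n x) = (\<lambda>y. k * pushZ p n y)"
    by (simp add: pushZ_bij_betw[OF p] freeZ_scale fun_eq_iff)
qed

section \<open>The inner automorphism group of a quandle\<close>

locale is_quandle =
  fixes Q :: "'a set" and op :: "'a \<Rightarrow> 'a \<Rightarrow> 'a"
  assumes quandle: "quandle Q op"
begin

lemma op_closed: "a \<in> Q \<Longrightarrow> b \<in> Q \<Longrightarrow> op a b \<in> Q"
  using quandle unfolding quandle_def by blast

lemma op_idem: "a \<in> Q \<Longrightarrow> op a a = a"
  using quandle unfolding quandle_def by blast

lemma op_right_div: "a \<in> Q \<Longrightarrow> b \<in> Q \<Longrightarrow> \<exists>!c. c \<in> Q \<and> op c b = a"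
  using quandle unfolding quandle_def by blast

lemma op_right_distrib: "a \<in> Q \<Longrightarrow> b \<in> Q \<Longrightarrow> c \<in> Q \<Longrightarrow> op (op a b) c = op (op a c) (op b c)"
  using quandle unfolding quandle_def by blast

lemma Rmul_apply: "y \<in> Q \<Longrightarrow> Rmul Q op a y = op y a"
  by (simp add: Rmul_def)

lemma Rmul_Bij: "a \<in> Q \<Longrightarrow> Rmul Q op a \<in> Bij Q"
proof -
  assume a: "a \<in> Q"
  have "bij_betw (\<lambda>y. op y a) Q Q"
  proof (rule bij_betwI')
    fix x y assume x: "x \<in> Q" and y: "y \<in> Q"
    show "(op x a = op y a) = (x = y)"
      using op_right_div[OF op_closed[OF x a] a] x y by (metis (no_types))
  next
    fix y assume "y \<in> Q"
    thus "\<exists>x\<in>Q. y = op x a" using op_right_div[OF _ a] by blast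
  qed (use a op_closed in blast)
  hence "bij_betw (Rmul Q op a) Q Q"
    using bij_betw_cong[of Q "Rmul Q op a" "\<lambda>y. op y a" Q] by (simp add: Rmul_apply)
  thus ?thesis by (simp add: Bij_def Rmul_def)
qed

lemma Inn_subgroup: "subgroup (carrier (Inn Q op)) (BijGroup Q)"
proof -
  have "Rmul Q op ` Q \<subseteq> carrier (BijGroup Q)" using Rmul_Bij by (auto simp: BijGroup_def)
  thus ?thesis unfolding Inn_def using group.generate_is_subgroup[OF group_BijGroup] by simp
qed

lemma group_Inn: "group (Inn Q op)"
  unfolding Inn_def using group.subgroup_imp_group[OF group_BijGroup Inn_subgroup]
  by (simp add: Inn_def)

lemma Inn_Bij: "g \<in> carrier (Inn Q op) \<Longrightarrow> g \<in> Bij Q"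
  using subgroup.mem_carrier[OF Inn_subgroup] by (simp add: BijGroup_def)

lemma Inn_apply_closed: "g \<in> carrier (Inn Q op) \<Longrightarrow> y \<in> Q \<Longrightarrow> g y \<in> Q"
  using Inn_Bij Bij_imp_funcset by blast

lemma Inn_mult_apply:
  assumes "g \<in> carrier (Inn Q op)" "h \<in> carrier (Inn Q op)" "y \<in> Q"
  shows "(g \<otimes>\<^bsub>Inn Q op\<^esub> h) y = g (h y)"
proof -
  have "g \<otimes>\<^bsub>Inn Q op\<^esub> h = compose Q g h"
    using Inn_Bij[OF assms(1)] Inn_Bij[OF assms(2)] unfolding Inn_def BijGroup_def by simp
  thus ?thesis using assms(3) by (simp add: compose_def)
qed

lemma Inn_one_apply: "y \<in> Q \<Longrightarrow> \<one>\<^bsub>Inn Q op\<^esub> y = y"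
  by (simp add: Inn_def BijGroup_def)

lemma Inn_eqI:
  assumes "g \<in> carrier (Inn Q op)" "h \<in> carrier (Inn Q op)" "\<And>y. y \<in> Q \<Longrightarrow> g y = h y"
  shows "g = h"
  using assms(3) Inn_Bij[OF assms(1)] Inn_Bij[OF assms(2)] by (auto simp: Bij_def intro: extensionalityI)

lemma Inn_inv_apply:
  assumes g: "g \<in> carrier (Inn Q op)" and y: "y \<in> Q"
  shows "(inv\<^bsub>Inn Q op\<^esub> g) (g y) = y" and "g ((inv\<^bsub>Inn Q op\<^esub> g) y) = y"
proof -
  interpret group "Inn Q op" by (rule group_Inn)
  show "(inv\<^bsub>Inn Q op\<^esub> g) (g y) = y"
    using Inn_mult_apply[of "inv\<^bsub>Inn Q op\<^esub> g" g y] Inn_one_apply[OF y] g y by simp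
  show "g ((inv\<^bsub>Inn Q op\<^esub> g) y) = y"
    using Inn_mult_apply[of g "inv\<^bsub>Inn Q op\<^esub> g" y] Inn_one_apply[OF y] g y by simp
qed

lemma Rmul_in_Inn: "a \<in> Q \<Longrightarrow> Rmul Q op a \<in> carrier (Inn Q op)"
  by (simp add: Inn_def generate.incl)

lemma carrier_Inn_generate: "carrier (Inn Q op) = generate (Inn Q op) (Rmul Q op ` Q)"
  using group.generate_consistent[OF group_BijGroup _ Inn_subgroup] Rmul_in_Inn
  by (simp add: Inn_def image_subset_iff)

lemma Inn_induct[consumes 1, case_names one Rmul Rmul_inv mult]:
  assumes "g \<in> carrier (Inn Q op)"
    and "P \<one>\<^bsub>Inn Q op\<^esub>"
    and "\<And>a. a \<in> Q \<Longrightarrow> P (Rmul Q op a)"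
    and "\<And>a. a \<in> Q \<Longrightarrow> P (inv\<^bsub>Inn Q op\<^esub> (Rmul Q op a))"
    and "\<And>g h. g \<in> carrier (Inn Q op) \<Longrightarrow> h \<in> carrier (Inn Q op) \<Longrightarrow> P g \<Longrightarrow> P h
           \<Longrightarrow> P (g \<otimes>\<^bsub>Inn Q op\<^esub> h)"
  shows "P g"
  using assms(1) unfolding carrier_Inn_generate
proof (induction rule: generate.induct)
  case (eng g h) thus ?case using assms(5) carrier_Inn_generate by auto
qed (use assms(2-4) in auto)


lemma Rmul_op_hom:
  assumes a: "a \<in> Q"
  shows "\<forall>x\<in>Q. \<forall>y\<in>Q. Rmul Q op a (op x y) = op (Rmul Q op a x) (Rmul Q op a y)"
proof (intro ballI)
  fix x y assume x: "x \<in> Q" and y: "y \<in> Q"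
  show "Rmul Q op a (op x y) = op (Rmul Q op a x) (Rmul Q op a y)"
    using x y by (simp add: Rmul_apply op_closed op_right_distrib[OF x y a])
qed

lemma Inn_inv_op_hom:
  assumes g: "g \<in> carrier (Inn Q op)" and hom: "\<forall>x\<in>Q. \<forall>y\<in>Q. g (op x y) = op (g x) (g y)"
  shows "\<forall>x\<in>Q. \<forall>y\<in>Q. (inv\<^bsub>Inn Q op\<^esub> g) (op x y) = op ((inv\<^bsub>Inn Q op\<^esub> g) x) ((inv\<^bsub>Inn Q op\<^esub> g) y)"
proof (intro ballI)
  fix x y assume x: "x \<in> Q" and y: "y \<in> Q"
  let ?h = "inv\<^bsub>Inn Q op\<^esub> g"
  have hx: "?h x \<in> Q" and hy: "?h y \<in> Q"
    using x y g group.inv_closed[OF group_Inn] Inn_apply_closed by blast+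
  have "g (op (?h x) (?h y)) = op x y"
    using hom hx hy Inn_inv_apply(2)[OF g x] Inn_inv_apply(2)[OF g y] by simp
  thus "?h (op x y) = op (?h x) (?h y)"
    using Inn_inv_apply(1)[OF g op_closed[OF hx hy]] by simp
qed

lemma Inn_op_hom:
  assumes g: "g \<in> carrier (Inn Q op)" and x: "x \<in> Q" and y: "y \<in> Q"
  shows "g (op x y) = op (g x) (g y)"
proof -
  have "\<forall>x\<in>Q. \<forall>y\<in>Q. g (op x y) = op (g x) (g y)"
    using g
  proof (induction g rule: Inn_induct)
    case one
    show ?case by (simp add: Inn_one_apply op_closed)
  next
    case (Rmul a)
    thus ?case by (rule Rmul_op_hom)
  next
    case (Rmul_inv a)
    thus ?case by (intro Inn_inv_op_hom Rmul_in_Inn Rmul_op_hom)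
  next
    case (mult g h)
    thus ?case by (simp add: Inn_mult_apply Inn_apply_closed op_closed)
  qed
  thus ?thesis using x y by blast
qed

lemma Rmul_conj:
  assumes g: "g \<in> carrier (Inn Q op)" and a: "a \<in> Q"
  shows "Rmul Q op (g a) \<otimes>\<^bsub>Inn Q op\<^esub> g = g \<otimes>\<^bsub>Inn Q op\<^esub> Rmul Q op a"
proof -
  interpret group "Inn Q op" by (rule group_Inn)
  have ga: "g a \<in> Q" using Inn_apply_closed[OF g a] .
  show ?thesis
    by (rule Inn_eqI)
      (use g a ga Rmul_in_Inn in \<open>simp_all add: Inn_mult_apply Rmul_apply Inn_op_hom Inn_apply_closed\<close>)
qed

lemma centralizer_Rmul_iff:
  assumes g: "g \<in> carrier (Inn Q op)" and a: "a \<in> Q"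
  shows "g \<in> centralizer (Inn Q op) (Rmul Q op a) \<longleftrightarrow> Rmul Q op (g a) = Rmul Q op a"
proof -
  interpret group "Inn Q op" by (rule group_Inn)
  have ga: "g a \<in> Q" using Inn_apply_closed[OF g a] .
  have "g \<in> centralizer (Inn Q op) (Rmul Q op a)
      \<longleftrightarrow> Rmul Q op (g a) \<otimes>\<^bsub>Inn Q op\<^esub> g = Rmul Q op a \<otimes>\<^bsub>Inn Q op\<^esub> g"
    using g by (simp add: centralizer_def Rmul_conj[OF g a])
  also have "\<dots> \<longleftrightarrow> Rmul Q op (g a) = Rmul Q op a"
    using g Rmul_in_Inn[OF a] Rmul_in_Inn[OF ga] by (simp add: r_cancel)
  finally show ?thesis .
qed

lemma generate_Rmul_fixes:
  assumes a: "a \<in> Q" and p: "p \<in> generate (Inn Q op) {Rmul Q op a}"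
  shows "p a = a"
  using p
proof (induction rule: generate.induct)
  case one
  show ?case using a by (simp add: Inn_one_apply)
next
  case (incl h)
  thus ?case using a by (simp add: Rmul_apply op_idem)
next
  case (inv h)
  thus ?case using Inn_inv_apply(1)[OF Rmul_in_Inn[OF a] a] a by (simp add: Rmul_apply op_idem)
next
  case (eng g h)
  have "{Rmul Q op a} \<subseteq> carrier (Inn Q op)" using Rmul_in_Inn[OF a] by simp
  hence "g \<in> carrier (Inn Q op)" "h \<in> carrier (Inn Q op)"
    using eng.hyps group.generate_in_carrier[OF group_Inn] by blast+
  thus ?case using eng.IH a by (simp add: Inn_mult_apply)
qed

lemma derived_Inn_subgroup: "subgroup (derived (Inn Q op) (carrier (Inn Q op))) (Inn Q op)"
  by (rule group.derived_is_subgroup[OF group_Inn]) simp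

lemma derived_Inn_in_carrier:
  "d \<in> derived (Inn Q op) (carrier (Inn Q op)) \<Longrightarrow> d \<in> carrier (Inn Q op)"
  by (rule subgroup.mem_carrier[OF derived_Inn_subgroup])

lemma inj_on_apply_derived:
  assumes free: "\<And>d a. d \<in> derived (Inn Q op) (carrier (Inn Q op)) \<Longrightarrow> a \<in> Q \<Longrightarrow> d a = a
                   \<Longrightarrow> d = \<one>\<^bsub>Inn Q op\<^esub>"
    and e: "e \<in> Q"
  shows "inj_on (\<lambda>g. g e) (derived (Inn Q op) (carrier (Inn Q op)))"
proof (rule inj_onI)
  interpret group "Inn Q op" by (rule group_Inn)
  fix g h assume g: "g \<in> derived (Inn Q op) (carrier (Inn Q op))"
    and h: "h \<in> derived (Inn Q op) (carrier (Inn Q op))" and gh: "g e = h e"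
  have "inv\<^bsub>Inn Q op\<^esub> h \<otimes>\<^bsub>Inn Q op\<^esub> g \<in> derived (Inn Q op) (carrier (Inn Q op))"
    using derived_Inn_subgroup g h by (simp add: subgroup.m_closed subgroup.m_inv_closed)
  moreover have "(inv\<^bsub>Inn Q op\<^esub> h \<otimes>\<^bsub>Inn Q op\<^esub> g) e = e"
    using g h gh e derived_Inn_in_carrier by (simp add: Inn_mult_apply Inn_inv_apply)
  ultimately have "inv\<^bsub>Inn Q op\<^esub> h \<otimes>\<^bsub>Inn Q op\<^esub> g = \<one>\<^bsub>Inn Q op\<^esub>"
    by (rule free[OF _ e])
  thus "g = h" using g h derived_Inn_in_carrier inv_solve_left[of "\<one>\<^bsub>Inn Q op\<^esub>" h g] by auto
qed

end

section \<open>Connected quandles\<close>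

locale is_connected_quandle =
  fixes Q :: "'a set" and op :: "'a \<Rightarrow> 'a \<Rightarrow> 'a"
  assumes connected: "connected_quandle Q op"
begin

sublocale is_quandle
  using connected by (unfold_locales) (simp add: connected_quandle_def)

lemma Rmul_mult_inv_derived:
  assumes a: "a \<in> Q" and b: "b \<in> Q"
  shows "Rmul Q op b \<otimes>\<^bsub>Inn Q op\<^esub> inv\<^bsub>Inn Q op\<^esub> (Rmul Q op a) \<in> derived (Inn Q op) (carrier (Inn Q op))"
proof -
  interpret group "Inn Q op" by (rule group_Inn)
  obtain g where g: "g \<in> carrier (Inn Q op)" "g a = b"
    using connected a b unfolding connected_quandle_def by blast
  have Ra: "Rmul Q op a \<in> carrier (Inn Q op)" and Rb: "Rmul Q op b \<in> carrier (Inn Q op)"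
    using a b Rmul_in_Inn by auto
  have "Rmul Q op b \<otimes>\<^bsub>Inn Q op\<^esub> g = g \<otimes>\<^bsub>Inn Q op\<^esub> Rmul Q op a"
    using Rmul_conj[OF g(1) a] g(2) by simp
  hence "Rmul Q op b = g \<otimes>\<^bsub>Inn Q op\<^esub> Rmul Q op a \<otimes>\<^bsub>Inn Q op\<^esub> inv\<^bsub>Inn Q op\<^esub> g"
    using g(1) Ra Rb by (simp add: inv_solve_right)
  moreover have "g \<otimes>\<^bsub>Inn Q op\<^esub> Rmul Q op a \<otimes>\<^bsub>Inn Q op\<^esub> inv\<^bsub>Inn Q op\<^esub> g \<otimes>\<^bsub>Inn Q op\<^esub> inv\<^bsub>Inn Q op\<^esub> (Rmul Q op a)
      \<in> derived_set (Inn Q op) (carrier (Inn Q op))"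
    using g(1) Ra by blast
  ultimately show ?thesis unfolding derived_def by (simp add: generate.incl)
qed

lemma derived_Inn_transitive:
  assumes a: "a \<in> Q" and b: "b \<in> Q"
  obtains d where "d \<in> derived (Inn Q op) (carrier (Inn Q op))" and "d a = b"
proof -
  interpret group "Inn Q op" by (rule group_Inn)
  obtain g where g: "g \<in> carrier (Inn Q op)" "g a = b"
    using connected a b unfolding connected_quandle_def by blast
  have "\<exists>d\<in>derived (Inn Q op) (carrier (Inn Q op)). \<exists>p\<in>generate (Inn Q op) {Rmul Q op a}.
          g = d \<otimes>\<^bsub>Inn Q op\<^esub> p"
  proof (rule generate_decomp_normal_cyclic)
    show "Rmul Q op ` Q \<subseteq> carrier (Inn Q op)" using Rmul_in_Inn by blast
    show "Rmul Q op a \<in> carrier (Inn Q op)" using Rmul_in_Inn[OF a] .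
    show "derived (Inn Q op) (carrier (Inn Q op)) \<lhd> Inn Q op" by (rule derived_self_is_normal)
    show "g \<in> generate (Inn Q op) (Rmul Q op ` Q)" using g(1) carrier_Inn_generate by simp
  qed (use Rmul_mult_inv_derived a in blast)
  then obtain d p where d: "d \<in> derived (Inn Q op) (carrier (Inn Q op))"
    and p: "p \<in> generate (Inn Q op) {Rmul Q op a}" and gdp: "g = d \<otimes>\<^bsub>Inn Q op\<^esub> p"
    by blast
  have "d \<in> carrier (Inn Q op)" using derived_Inn_in_carrier[OF d] .
  moreover have "p \<in> carrier (Inn Q op)" using p Rmul_in_Inn[OF a] generate_in_carrier by blast
  ultimately have "d a = b"
    using g gdp a generate_Rmul_fixes[OF a p] by (simp add: Inn_mult_apply)
  with d that show thesis by blast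
qed

theorem bij_betw_centralizer_derived:
  assumes free: "\<And>d a. d \<in> derived (Inn Q op) (carrier (Inn Q op)) \<Longrightarrow> a \<in> Q \<Longrightarrow> d a = a
                   \<Longrightarrow> d = \<one>\<^bsub>Inn Q op\<^esub>"
    and e: "e \<in> Q"
  shows "bij_betw (\<lambda>g. g e)
           (centralizer (Inn Q op) (Rmul Q op e) \<inter> derived (Inn Q op) (carrier (Inn Q op)))
           {a \<in> Q. Rmul Q op a = Rmul Q op e}"
proof -
  let ?D = "derived (Inn Q op) (carrier (Inn Q op))"
  let ?C = "centralizer (Inn Q op) (Rmul Q op e)"
  show ?thesis unfolding bij_betw_def
  proof (intro conjI equalityI subsetI)
    show "inj_on (\<lambda>g. g e) (?C \<inter> ?D)"
      using inj_on_apply_derived[OF free e] Int_lower2 by (rule inj_on_subset)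
  next
    fix a assume "a \<in> (\<lambda>g. g e) ` (?C \<inter> ?D)"
    then obtain g where "g \<in> ?C" "g \<in> ?D" and "a = g e" by blast
    thus "a \<in> {a \<in> Q. Rmul Q op a = Rmul Q op e}"
      using centralizer_Rmul_iff[OF derived_Inn_in_carrier e] Inn_apply_closed[OF derived_Inn_in_carrier e]
      by simp
  next
    fix a assume "a \<in> {a \<in> Q. Rmul Q op a = Rmul Q op e}"
    hence a: "a \<in> Q" and Ra: "Rmul Q op a = Rmul Q op e" by auto
    obtain d where d: "d \<in> ?D" and de: "d e = a" using derived_Inn_transitive[OF e a] .
    have "d \<in> ?C" using centralizer_Rmul_iff[OF derived_Inn_in_carrier[OF d] e] de Ra by simp
    with d de show "a \<in> (\<lambda>g. g e) ` (?C \<inter> ?D)" by (intro image_eqI[of a _ d]) simp_all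
  qed
qed

end

section \<open>Generalized Alexander quandles\<close>

locale galex_quandle = is_quandle Q op + group G0
  for Q :: "'a set" and op :: "'a \<Rightarrow> 'a \<Rightarrow> 'a" and G0 :: "('g, 'b) monoid_scheme" (structure) +
  fixes f :: "'g \<Rightarrow> 'g" and \<phi> :: "'a \<Rightarrow> 'g"
  assumes finite_G0: "finite (carrier G0)"
    and f_iso: "f \<in> iso G0 G0"
    and \<phi>_iso: "quandle_iso Q op (carrier G0) (galex_op G0 f) \<phi>"
begin

definition twist :: "'g \<Rightarrow> 'g" where
  "twist a = inv (f a) \<otimes> a"

definition affine :: "nat \<Rightarrow> 'g \<Rightarrow> ('a \<Rightarrow> 'a) \<Rightarrow> bool" where
  "affine n k g \<longleftrightarrow> k \<in> carrier G0 \<and> (\<forall>y\<in>Q. \<phi> (g y) = (f ^^ n) (\<phi> y) \<otimes> k)"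

lemma \<phi>_bij: "bij_betw \<phi> Q (carrier G0)"
  using \<phi>_iso by (simp add: quandle_iso_def)

lemma \<phi>_closed[simp]: "y \<in> Q \<Longrightarrow> \<phi> y \<in> carrier G0"
  using \<phi>_bij bij_betwE by blast

lemma \<phi>_inject: "x \<in> Q \<Longrightarrow> y \<in> Q \<Longrightarrow> \<phi> x = \<phi> y \<longleftrightarrow> x = y"
  by (rule inj_on_eq_iff[OF bij_betw_imp_inj_on[OF \<phi>_bij]])

lemma funpow_f_hom: "f ^^ n \<in> hom G0 G0"
  using f_iso by (simp add: iso_def hom_funpow)

lemma funpow_f_closed[simp]: "x \<in> carrier G0 \<Longrightarrow> (f ^^ n) x \<in> carrier G0"
  by (rule hom_in_carrier[OF funpow_f_hom])

lemma funpow_f_mult: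
  "x \<in> carrier G0 \<Longrightarrow> y \<in> carrier G0 \<Longrightarrow> (f ^^ n) (x \<otimes> y) = (f ^^ n) x \<otimes> (f ^^ n) y"
  by (rule hom_mult[OF funpow_f_hom])

lemma funpow_f_inv: "x \<in> carrier G0 \<Longrightarrow> (f ^^ n) (inv x) = inv ((f ^^ n) x)"
  using group_hom.hom_inv[of G0 G0 "f ^^ n"] funpow_f_hom
  by (simp add: group_hom_def group_hom_axioms_def is_group)

lemma f_closed[simp]: "x \<in> carrier G0 \<Longrightarrow> f x \<in> carrier G0"
  using funpow_f_closed[of x 1] by simp

lemma twist_closed[simp]: "x \<in> carrier G0 \<Longrightarrow> twist x \<in> carrier G0"
  by (simp add: twist_def)

lemma \<phi>_op: "x \<in> Q \<Longrightarrow> y \<in> Q \<Longrightarrow> \<phi> (op x y) = f (\<phi> x) \<otimes> twist (\<phi> y)"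
  using \<phi>_iso funpow_f_mult[of _ _ 1] funpow_f_inv[of _ 1]
  by (simp add: quandle_iso_def galex_op_def twist_def m_assoc)

lemma exists_inverse_exponent: "\<exists>m. \<forall>y\<in>carrier G0. (f ^^ (m + n)) y = y"
proof -
  have "bij_betw f (carrier G0) (carrier G0)" using f_iso by (simp add: iso_def)
  then obtain N where N: "N > 0" "\<And>y. y \<in> carrier G0 \<Longrightarrow> (f ^^ N) y = y"
    using funpow_period_on[OF finite_G0] by blast
  have "(N - 1) * n + n = N * n" using N(1) by (cases N) simp_all
  thus ?thesis using funpow_mult_fixed[OF N(2)] by metis
qed

lemma affine_mult:
  assumes g: "g \<in> carrier (Inn Q op)" and h: "h \<in> carrier (Inn Q op)"
    and gk: "affine n k g" and hl: "affine m l h"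
  shows "affine (n + m) ((f ^^ n) l \<otimes> k) (g \<otimes>\<^bsub>Inn Q op\<^esub> h)"
proof -
  have k: "k \<in> carrier G0" and l: "l \<in> carrier G0" using gk hl by (simp_all add: affine_def)
  have "\<phi> ((g \<otimes>\<^bsub>Inn Q op\<^esub> h) y) = (f ^^ (n + m)) (\<phi> y) \<otimes> ((f ^^ n) l \<otimes> k)"
    if y: "y \<in> Q" for y
  proof -
    have "\<phi> ((g \<otimes>\<^bsub>Inn Q op\<^esub> h) y) = (f ^^ n) (\<phi> (h y)) \<otimes> k"
      using gk g h y by (simp add: affine_def Inn_mult_apply Inn_apply_closed)
    also have "\<dots> = (f ^^ n) ((f ^^ m) (\<phi> y) \<otimes> l) \<otimes> k"
      using hl y by (simp add: affine_def)
    also have "\<dots> = (f ^^ (n + m)) (\<phi> y) \<otimes> ((f ^^ n) l \<otimes> k)"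
      using y k l by (simp add: funpow_f_mult funpow_add m_assoc)
    finally show ?thesis .
  qed
  thus ?thesis using k l by (simp add: affine_def)
qed

lemma affine_inv:
  assumes g: "g \<in> carrier (Inn Q op)" and gk: "affine n k g"
    and m: "\<forall>y\<in>carrier G0. (f ^^ (m + n)) y = y"
  shows "affine m ((f ^^ m) (inv k)) (inv\<^bsub>Inn Q op\<^esub> g)"
proof -
  have k: "k \<in> carrier G0" using gk by (simp add: affine_def)
  have "\<phi> ((inv\<^bsub>Inn Q op\<^esub> g) y) = (f ^^ m) (\<phi> y) \<otimes> (f ^^ m) (inv k)" if y: "y \<in> Q" for y
  proof -
    let ?z = "(inv\<^bsub>Inn Q op\<^esub> g) y"
    have z: "?z \<in> Q" using g y group.inv_closed[OF group_Inn] Inn_apply_closed by blast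
    have "\<phi> (g ?z) = (f ^^ n) (\<phi> ?z) \<otimes> k" using gk z unfolding affine_def by blast
    hence "(f ^^ n) (\<phi> ?z) = \<phi> y \<otimes> inv k"
      using Inn_inv_apply(2)[OF g y] y z k by (simp add: inv_solve_right)
    hence "(f ^^ m) ((f ^^ n) (\<phi> ?z)) = (f ^^ m) (\<phi> y) \<otimes> (f ^^ m) (inv k)"
      using y k by (simp add: funpow_f_mult)
    thus ?thesis using m z by (simp add: funpow_add)
  qed
  thus ?thesis using k by (simp add: affine_def funpow_f_mult)
qed

lemma affine_Rmul: "a \<in> Q \<Longrightarrow> affine 1 (twist (\<phi> a)) (Rmul Q op a)"
  by (simp add: affine_def Rmul_apply \<phi>_op)

lemma Inn_affine: "g \<in> carrier (Inn Q op) \<Longrightarrow> \<exists>n k. affine n k g"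
proof (induction g rule: Inn_induct)
  case one
  have "affine 0 \<one> \<one>\<^bsub>Inn Q op\<^esub>" by (simp add: affine_def Inn_one_apply)
  thus ?case by blast
next
  case (Rmul a)
  thus ?case using affine_Rmul by blast
next
  case (Rmul_inv a)
  obtain m where "\<forall>y\<in>carrier G0. (f ^^ (m + 1)) y = y" using exists_inverse_exponent by blast
  thus ?case using affine_inv[OF Rmul_in_Inn affine_Rmul] Rmul_inv by blast
next
  case (mult g h)
  thus ?case using affine_mult by blast
qed

lemma commutator_translation:
  assumes g: "g \<in> carrier (Inn Q op)" and h: "h \<in> carrier (Inn Q op)"
  shows "\<exists>k. affine 0 k
           (g \<otimes>\<^bsub>Inn Q op\<^esub> h \<otimes>\<^bsub>Inn Q op\<^esub> inv\<^bsub>Inn Q op\<^esub> g \<otimes>\<^bsub>Inn Q op\<^esub> inv\<^bsub>Inn Q op\<^esub> h)"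
proof -
  interpret I: group "Inn Q op" by (rule group_Inn)
  obtain n k where gk: "affine n k g" using Inn_affine[OF g] by blast
  obtain m l where hl: "affine m l h" using Inn_affine[OF h] by blast
  obtain n' where n': "\<forall>y\<in>carrier G0. (f ^^ (n' + n)) y = y" using exists_inverse_exponent by blast
  obtain m' where m': "\<forall>y\<in>carrier G0. (f ^^ (m' + m)) y = y" using exists_inverse_exponent by blast
  obtain K where K: "affine (n + m + n' + m') K
      (g \<otimes>\<^bsub>Inn Q op\<^esub> h \<otimes>\<^bsub>Inn Q op\<^esub> inv\<^bsub>Inn Q op\<^esub> g \<otimes>\<^bsub>Inn Q op\<^esub> inv\<^bsub>Inn Q op\<^esub> h)"
    using affine_mult[OF I.m_closed[OF I.m_closed[OF g h] I.inv_closed[OF g]] I.inv_closed[OF h]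
        affine_mult[OF I.m_closed[OF g h] I.inv_closed[OF g] affine_mult[OF g h gk hl]
          affine_inv[OF g gk n']] affine_inv[OF h hl m']]
    by blast
  have "(f ^^ (n + m + n' + m')) y = y" if "y \<in> carrier G0" for y
  proof -
    \<comment> \<open>the linear parts of g and of its inverse cancel since powers of f commute\<close>
    have "n + m + n' + m' = (n' + n) + (m' + m)" by simp
    thus ?thesis using n' m' that by (simp only: funpow_add comp_apply)
  qed
  with K show ?thesis by (auto simp: affine_def)
qed

lemma derived_translation:
  assumes "d \<in> derived (Inn Q op) (carrier (Inn Q op))"
  shows "\<exists>k. affine 0 k d"
  using assms unfolding derived_def
proof (induction rule: generate.induct)
  case one
  have "affine 0 \<one> \<one>\<^bsub>Inn Q op\<^esub>" by (simp add: affine_def Inn_one_apply)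
  thus ?case by blast
next
  case (incl c)
  thus ?case using commutator_translation by blast
next
  case (inv c)
  have "c \<in> carrier (Inn Q op)"
    using derived_Inn_in_carrier[unfolded derived_def, OF generate.incl[OF inv]] .
  moreover obtain k where "affine 0 k c" using inv commutator_translation by blast
  ultimately have "affine 0 ((f ^^ 0) (inv k)) (inv\<^bsub>Inn Q op\<^esub> c)"
    using affine_inv[of c 0 k 0] by simp
  thus ?case by blast
next
  case (eng c d)
  have "c \<in> carrier (Inn Q op)" "d \<in> carrier (Inn Q op)"
    using eng.hyps derived_Inn_in_carrier[unfolded derived_def] by blast+
  thus ?case using eng.IH affine_mult[of c d 0 _ 0] by fastforce
qed

lemma derived_Inn_free:
  assumes d: "d \<in> derived (Inn Q op) (carrier (Inn Q op))" and a: "a \<in> Q" and da: "d a = a"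
  shows "d = \<one>\<^bsub>Inn Q op\<^esub>"
proof -
  interpret I: group "Inn Q op" by (rule group_Inn)
  have dI: "d \<in> carrier (Inn Q op)" using derived_Inn_in_carrier[OF d] .
  obtain k where k: "k \<in> carrier G0" and dk: "\<And>y. y \<in> Q \<Longrightarrow> \<phi> (d y) = \<phi> y \<otimes> k"
    using derived_translation[OF d] by (auto simp: affine_def)
  have "\<phi> a \<otimes> k = \<phi> a \<otimes> \<one>" using dk[OF a] da a by simp
  hence "k = \<one>" using a k by (simp add: l_cancel)
  hence "d y = y" if "y \<in> Q" for y
    using dk[OF that] \<phi>_inject[OF Inn_apply_closed[OF dI that] that] that by simp
  thus ?thesis by (intro Inn_eqI[OF dI I.one_closed]) (simp add: Inn_one_apply)
qed

end

theorem mainTheorem7: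
  fixes Q :: "'a set" and op :: "'a \<Rightarrow> 'a \<Rightarrow> 'a"
    and G0 :: "('g, 'b) monoid_scheme" and f :: "'g \<Rightarrow> 'g" and \<phi> :: "'a \<Rightarrow> 'g"
    and e :: 'a
  assumes "finite Q" and "connected_quandle Q op"
    and "group G0" and "finite (carrier G0)" and "f \<in> iso G0 G0"
    and "quandle_iso Q op (carrier G0) (galex_op G0 f) \<phi>"
    and "e \<in> Q"
  shows "bij_betw (\<lambda>g. g e)
           (centralizer (Inn Q op) (Rmul Q op e) \<inter> derived (Inn Q op) (carrier (Inn Q op)))
           {a \<in> Q. Rmul Q op a = Rmul Q op e}
       \<and> Zmod_iso
           (centralizer (Inn Q op) (Rmul Q op e) \<inter> derived (Inn Q op) (carrier (Inn Q op)))
           {a \<in> Q. Rmul Q op a = Rmul Q op e}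
           (pushZ (\<lambda>g. g e))"
proof -
  interpret is_connected_quandle Q op by unfold_locales (rule assms(2))
  interpret galex_quandle Q op G0 f \<phi>
    using is_quandle_axioms assms(3-6) by (simp add: galex_quandle_def galex_quandle_axioms_def)
  have "bij_betw (\<lambda>g. g e)
          (centralizer (Inn Q op) (Rmul Q op e) \<inter> derived (Inn Q op) (carrier (Inn Q op)))
          {a \<in> Q. Rmul Q op a = Rmul Q op e}"
    by (rule bij_betw_centralizer_derived[OF derived_Inn_free assms(7)])
  thus ?thesis using Zmod_iso_pushZ by blast
qed

end
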